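(* Let $G$ be a graph with at least two edges, $G\ne 2K_2$, and with maximum degree at most $2$. Then, as $n\to\infty$, $$f(n,\mathcal{B}(G))\ge \frac{2^{n-1}}{|E(G)|-1}(1-o(1)).$$
   Context: $2K_2$ is the graph consisting of two disjoint edges. For a graph $G$, a hypergraph $H$ is a Berge-$G$ hypergraph if there are an injective map $\phi:V(G)\to V(H)$ and pairwise distinct hyperedges $e_{xy}\in E(H)$, one for each $xy\in E(G)$, with $\phi(x),\phi(y)\in e_{xy}$. $\mathcal{B}(G)$ denotes the family of all Berge-$G$ hypergraphs. For a positive integer $n$ and a graph $G$, $f(n,\mathcal{B}(G))$ is the smallest number of colors in a coloring of all subsets of $[n]=\{1,\dots,n\}$ (i.e. of $2^{[n]}$) such that there is no monochromatic Berge-$G$ hypergraph, i.e. no color class, viewed as a (non-uniform) hypergraph on $[n]$, contains a Berge-$G$ subhypergraph. *)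

theory Defs
  imports Complex_Main
begin

(* A (finite simple) graph G is given by its edge set E :: 'v set set, each edge a
   2-element set; V(G) is the union of the edges (no isolated vertices). *)

definition is_graph :: "'v set set \<Rightarrow> bool" where
  "is_graph E \<longleftrightarrow> finite E \<and> (\<forall>e\<in>E. card e = 2)"

definition gverts :: "'v set set \<Rightarrow> 'v set" where
  "gverts E = \<Union>E"

definition gdegree :: "'v set set \<Rightarrow> 'v \<Rightarrow> nat" where
  "gdegree E v = card {e\<in>E. v \<in> e}"

definition is_2K2 :: "'v set set \<Rightarrow> bool" where
  "is_2K2 E \<longleftrightarrow> card E = 2 \<and> (\<forall>e1\<in>E. \<forall>e2\<in>E. e1 \<noteq> e2 \<longrightarrow> e1 \<inter> e2 = {})"

definition berge_copy :: "'v set set \<Rightarrow> 'a set set \<Rightarrow> bool" where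
  "berge_copy E H \<longleftrightarrow>
     (\<exists>(phi :: 'v \<Rightarrow> 'a) (psi :: 'v set \<Rightarrow> 'a set).
        inj_on phi (gverts E) \<and> inj_on psi E \<and>
        (\<forall>e\<in>E. psi e \<in> H \<and> phi ` e \<subseteq> psi e))"

definition good_coloring :: "'v set set \<Rightarrow> nat \<Rightarrow> nat \<Rightarrow> (nat set \<Rightarrow> nat) \<Rightarrow> bool" where
  "good_coloring E n k c \<longleftrightarrow>
     (\<forall>A\<in>Pow {1..n}. c A < k) \<and>
     (\<forall>i. \<not> berge_copy E {A \<in> Pow {1..n}. c A = i})"

definition f_berge :: "nat \<Rightarrow> 'v set set \<Rightarrow> nat" where
  "f_berge n E = (LEAST k. \<exists>c. good_coloring E n k c)"

end

theory Submission
  imports Defs "HOL-Real_Asymp.Real_Asymp"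
begin

text \<open>
  Call a set \<open>A \<subseteq> [n]\<close> large if \<open>2|A| \<ge> n + 2|E(G)|\<close>. Any \<open>|E(G)|\<close> large sets carry a
  Berge copy of \<open>G\<close>: assign them bijectively to the edges; since every vertex lies in at most
  two edges and two large sets meet in at least \<open>2|E(G)| \<ge> |V(G)|\<close> points, each vertex can
  be mapped greedily and injectively into the intersection of the sets of its edges. Hence a
  colour class contains at most \<open>|E(G)| - 1\<close> large sets. By complementation and the bound
  \<open>binom n (n div 2) \<le> 2^n / sqrt (n + 1)\<close> on the sets of nearly half size, about
  \<open>2^(n-1)\<close> subsets are large, which gives the bound.
\<close>

lemma inj_on_choice_from_large_sets:
  assumes "finite V" and "\<And>v. v \<in> V \<Longrightarrow> finite (S v) \<and> card V \<le> card (S v)"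
  shows "\<exists>phi. inj_on phi V \<and> (\<forall>v\<in>V. phi v \<in> S v)"
  using assms
proof (induction V rule: finite_induct)
  case empty
  then show ?case by auto
next
  case (insert x F)
  then obtain phi where phi: "inj_on phi F" "\<forall>v\<in>F. phi v \<in> S v" by fastforce
  have "card (phi ` F) < card (S x)"
    using card_image_le[OF insert.hyps(1), of phi] insert.prems[of x] insert.hyps by simp
  then obtain y where y: "y \<in> S x" "y \<notin> phi ` F"
    by (meson card_mono finite_imageI insert.hyps(1) leD subsetI)
  have "inj_on (phi(x := y)) (insert x F)"
    using phi(1) y(2) insert.hyps(2) by (auto simp: inj_on_def)
  moreover have "\<forall>v\<in>insert x F. (phi(x := y)) v \<in> S v"
    using phi(2) y(1) insert.hyps(2) by auto
  ultimately show ?case by blast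
qed

lemma card_add_le_card_Int:
  assumes "finite U" "A \<subseteq> U" "B \<subseteq> U"
  shows "card A + card B \<le> card U + card (A \<inter> B)"
proof -
  have "card (A \<union> B) \<le> card U" using assms by (intro card_mono) auto
  moreover have "card (A \<union> B) + card (A \<inter> B) = card A + card B"
    using assms by (metis card_Un_Int finite_subset)
  ultimately show ?thesis by linarith
qed

lemma card_vertices_le:
  assumes "is_graph E"
  shows "card (gverts E) \<le> 2 * card E"
proof -
  have "card (gverts E) \<le> sum card E" unfolding gverts_def by (rule card_Union_le_sum_card)
  also have "\<dots> = 2 * card E" using assms by (simp add: is_graph_def)
  finally show ?thesis .
qed

lemma finite_vertices: "is_graph E \<Longrightarrow> finite (gverts E)"
  unfolding is_graph_def gverts_def by (metis card_ge_0_finite finite_Union zero_less_numeral)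

lemma card_le_2_obtain_pair:
  assumes "D \<noteq> {}" "card D \<le> 2" "finite D"
  obtains x y where "D = {x, y}"
proof -
  have "0 < card D" using assms(1,3) by (simp add: card_gt_0_iff)
  then have "card D = 1 \<or> card D = 2" using assms(2) by linarith
  then show ?thesis
  proof
    assume "card D = 1"
    then obtain x where "D = {x}" by (auto simp: card_1_singleton_iff)
    then show ?thesis using that[of x x] by simp
  next
    assume "card D = 2"
    then show ?thesis using that by (auto simp: card_2_iff)
  qed
qed

lemma berge_copy_mono: "berge_copy E H \<Longrightarrow> H \<subseteq> H' \<Longrightarrow> berge_copy E H'"
  unfolding berge_copy_def by blast

lemma berge_copy_of_large_sets:
  assumes G: "is_graph E" and deg: "\<forall>v. gdegree E v \<le> 2"
    and U: "finite U" and HU: "H \<subseteq> Pow U"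
    and large: "\<And>A. A \<in> H \<Longrightarrow> card U + 2 * card E \<le> 2 * card A"
    and many: "card E \<le> card H"
  shows "berge_copy E H"
proof -
  obtain H' where H': "H' \<subseteq> H" "card H' = card E"
    using obtain_subset_with_card_n[OF many] by blast
  have "finite H'" using H' HU U by (meson finite_Pow_iff finite_subset)
  then obtain psi where psi: "bij_betw psi E H'"
    using finite_same_card_bij G H'(2) unfolding is_graph_def by metis
  have psiH: "psi e \<in> H" if "e \<in> E" for e using psi H'(1) that by (auto simp: bij_betw_def)
  define S where "S v = U \<inter> \<Inter> (psi ` {e\<in>E. v \<in> e})" for v
  have "finite (S v) \<and> card (gverts E) \<le> card (S v)" if v: "v \<in> gverts E" for v
  proof -
    have "{e\<in>E. v \<in> e} \<noteq> {}" "card {e\<in>E. v \<in> e} \<le> 2" "finite {e\<in>E. v \<in> e}"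
      using v deg G unfolding gverts_def gdegree_def is_graph_def by auto
    then obtain e1 e2 where D: "{e\<in>E. v \<in> e} = {e1, e2}"
      by (rule card_le_2_obtain_pair)
    then have e: "e1 \<in> E" "e2 \<in> E" by auto
    then have psiU: "psi e1 \<subseteq> U" "psi e2 \<subseteq> U" using psiH HU by auto
    then have "S v = psi e1 \<inter> psi e2" using D unfolding S_def by auto
    then have "card (psi e1) + card (psi e2) \<le> card U + card (S v)"
      using card_add_le_card_Int[OF U psiU] by simp
    then have "2 * card E \<le> card (S v)"
      using large[OF psiH[OF e(1)]] large[OF psiH[OF e(2)]] by linarith
    then show ?thesis using U card_vertices_le[OF G] unfolding S_def by auto
  qed
  then obtain phi where phi: "inj_on phi (gverts E)" "\<forall>v\<in>gverts E. phi v \<in> S v"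
    using inj_on_choice_from_large_sets[OF finite_vertices[OF G]] by blast
  have "phi ` e \<subseteq> psi e" if "e \<in> E" for e
    using phi(2) that unfolding S_def gverts_def by blast
  moreover have "inj_on psi E" using psi by (simp add: bij_betw_def)
  ultimately show ?thesis
    unfolding berge_copy_def using phi(1) psiH by blast
qed

lemma Suc_times_central_binomial_Suc:
  "Suc k * ((2 * k + 2) choose (k + 1)) = 2 * (2 * k + 1) * ((2 * k) choose k)"
proof -
  have "Suc k * (Suc (Suc (2 * k)) choose Suc k) = Suc (Suc (2 * k)) * (Suc (2 * k) choose k)"
    by (rule Suc_times_binomial)
  also have "Suc (2 * k) choose k = Suc (2 * k) choose Suc k"
    using binomial_symmetric[of k "Suc (2 * k)"] by simp
  also have "Suc (Suc (2 * k)) * \<dots> = 2 * (Suc k * (Suc (2 * k) choose Suc k))" by simp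
  also have "Suc k * (Suc (2 * k) choose Suc k) = Suc (2 * k) * ((2 * k) choose k)"
    by (rule Suc_times_binomial)
  finally show ?thesis by simp
qed

lemma central_binomial_even_bound: "((2 * k) choose k)^2 * (2 * k + 1) \<le> (16::nat)^k"
proof (induction k)
  case 0
  then show ?case by simp
next
  case (Suc k)
  define a where "a = (2 * k) choose k"
  define b where "b = (2 * k + 2) choose (k + 1)"
  have ab: "(k + 1) * b = 2 * (2 * k + 1) * a"
    using Suc_times_central_binomial_Suc[of k] unfolding a_def b_def by simp
  have "(k + 1)^2 * (b^2 * (2 * k + 3)) = ((k + 1) * b)^2 * (2 * k + 3)"
    by (simp only: power_mult_distrib mult.assoc)
  also have "\<dots> = 4 * (2 * k + 1) * (2 * k + 3) * (a^2 * (2 * k + 1))"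
    unfolding ab by (simp add: power2_eq_square algebra_simps)
  also have "\<dots> \<le> 4 * (2 * k + 1) * (2 * k + 3) * 16^k"
    using Suc.IH unfolding a_def by (intro mult_le_mono2)
  also have "\<dots> \<le> 16 * (k + 1)^2 * 16^k"
    by (intro mult_le_mono1) (simp add: power2_eq_square algebra_simps)
  also have "\<dots> = (k + 1)^2 * 16^Suc k" by simp
  finally have "b^2 * (2 * k + 3) \<le> 16^Suc k"
    by (simp del: power_Suc)
  then show ?case unfolding b_def by (simp add: algebra_simps)
qed

lemma central_binomial_bound: "(n choose (n div 2))^2 * (n + 1) \<le> (4::nat)^n"
proof (cases "even n")
  case True
  then obtain k where n: "n = 2 * k" by blast
  then show ?thesis using central_binomial_even_bound[of k] by (simp add: power_mult)
next
  case False
  then obtain k where n: "n = 2 * k + 1" using oddE by blast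
  define c where "c = (2 * k + 1) choose k"
  have "Suc k * ((2 * (k + 1)) choose (k + 1)) = Suc k * (2 * c)"
    using Suc_times_binomial[of k "Suc (2 * k)"] unfolding c_def by (simp del: binomial_Suc_Suc)
  then have c2: "(2 * (k + 1)) choose (k + 1) = 2 * c"
    by (metis Suc_neq_Zero mult_left_cancel)
  have "4 * (c^2 * (2 * k + 3)) = (2 * c)^2 * (2 * (k + 1) + 1)"
    by (simp add: power2_eq_square algebra_simps)
  also have "\<dots> \<le> 16 * 16^k"
    using central_binomial_even_bound[of "k + 1", unfolded c2] by simp
  finally have "c^2 * (2 * k + 3) \<le> 4 * 16^k" by simp
  moreover have "c^2 * (2 * k + 2) \<le> c^2 * (2 * k + 3)" by (rule mult_le_mono2) simp
  ultimately show ?thesis using n by (simp add: c_def power_mult)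
qed

lemma central_binomial_le: "real (n choose (n div 2)) \<le> 2^n / sqrt (real n + 1)"
proof -
  let ?c = "real (n choose (n div 2))"
  have "real ((n choose (n div 2))^2 * (n + 1)) \<le> real (4^n)"
    using central_binomial_bound[of n] by (simp only: of_nat_le_iff)
  moreover have "(4::real)^n = (2^n)^2"
    by (simp add: power2_eq_square power_mult_distrib[symmetric])
  ultimately have "?c^2 * (real n + 1) \<le> (2^n)^2" by (simp add: algebra_simps)
  then have "sqrt (?c^2 * (real n + 1)) \<le> 2^n"
    using real_sqrt_le_mono by fastforce
  then have "?c * sqrt (real n + 1) \<le> 2^n" by (simp add: real_sqrt_mult)
  then show ?thesis by (simp add: field_simps)
qed

lemma card_large_subsets_eq_card_small_subsets:
  assumes "finite U"
  shows "card {A \<in> Pow U. card U + T \<le> 2 * card A} = card {A \<in> Pow U. 2 * card A + T \<le> card U}"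
proof (rule bij_betw_same_card[of "\<lambda>A. U - A"], rule bij_betw_byWitness[where f' = "\<lambda>A. U - A"])
  have card_compl: "card (U - A) = card U - card A" "card A \<le> card U" if "A \<subseteq> U" for A
    using that assms by (auto simp: card_Diff_subset finite_subset card_mono)
  show "(\<lambda>A. U - A) ` {A \<in> Pow U. card U + T \<le> 2 * card A}
          \<subseteq> {A \<in> Pow U. 2 * card A + T \<le> card U}"
  proof (rule image_subsetI)
    fix A assume "A \<in> {A \<in> Pow U. card U + T \<le> 2 * card A}"
    with card_compl[of A] show "U - A \<in> {A \<in> Pow U. 2 * card A + T \<le> card U}" by auto
  qed
  show "(\<lambda>A. U - A) ` {A \<in> Pow U. 2 * card A + T \<le> card U}
          \<subseteq> {A \<in> Pow U. card U + T \<le> 2 * card A}"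
  proof (rule image_subsetI)
    fix A assume "A \<in> {A \<in> Pow U. 2 * card A + T \<le> card U}"
    with card_compl[of A] show "U - A \<in> {A \<in> Pow U. card U + T \<le> 2 * card A}" by auto
  qed
qed auto

lemma card_subsets_near_half_le:
  assumes "finite U"
  shows "card {A \<in> Pow U. card U < 2 * card A + T \<and> 2 * card A < card U + T}
           \<le> (2 * T + 1) * (card U choose (card U div 2))"
proof -
  define n where "n = card U"
  define J where "J = {n div 2 - T .. n div 2 + T}"
  have "{A \<in> Pow U. n < 2 * card A + T \<and> 2 * card A < n + T}
          \<subseteq> (\<Union>j\<in>J. {A. A \<subseteq> U \<and> card A = j})"
    unfolding J_def by auto
  then have "card {A \<in> Pow U. n < 2 * card A + T \<and> 2 * card A < n + T}
               \<le> card (\<Union>j\<in>J. {A. A \<subseteq> U \<and> card A = j})"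
    using assms by (intro card_mono) (auto simp: J_def)
  also have "\<dots> \<le> (\<Sum>j\<in>J. card {A. A \<subseteq> U \<and> card A = j})"
    by (rule card_UN_le) (simp add: J_def)
  also have "\<dots> = (\<Sum>j\<in>J. n choose j)" using assms by (simp add: n_subsets n_def)
  also have "\<dots> \<le> card J * (n choose (n div 2))"
    using sum_mono[of J "\<lambda>j. n choose j" "\<lambda>_. n choose (n div 2)"] binomial_maximum by simp
  also have "\<dots> \<le> (2 * T + 1) * (n choose (n div 2))"
    by (intro mult_le_mono1) (simp add: J_def)
  finally show ?thesis unfolding n_def .
qed

lemma two_pow_le_card_large_subsets:
  assumes "finite U"
  shows "2 ^ card U \<le> 2 * card {A \<in> Pow U. card U + T \<le> 2 * card A}
                        + (2 * T + 1) * (card U choose (card U div 2))"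
proof -
  define L where "L = {A \<in> Pow U. card U + T \<le> 2 * card A}"
  define S where "S = {A \<in> Pow U. 2 * card A + T \<le> card U}"
  define B where "B = {A \<in> Pow U. card U < 2 * card A + T \<and> 2 * card A < card U + T}"
  have "2 ^ card U = card (L \<union> S \<union> B)"
    using assms by (simp add: card_Pow[symmetric])
      (intro arg_cong[where f = card], auto simp: L_def S_def B_def)
  also have "\<dots> \<le> card L + card S + card B"
    by (meson add_le_mono1 card_Un_le order_trans)
  also have "card S = card L"
    unfolding L_def S_def by (rule card_large_subsets_eq_card_small_subsets[OF assms, symmetric])
  finally show ?thesis
    using card_subsets_near_half_le[OF assms, of T] unfolding L_def B_def by linarith
qed

lemma ex_good_coloring_2_pow:
  assumes "2 \<le> card E"
  shows "\<exists>c. good_coloring E n (2 ^ n) c"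
proof -
  obtain h where h: "bij_betw h (Pow {1..n}) {0..<(2::nat) ^ n}"
    using ex_bij_betw_finite_nat[of "Pow {1..n::nat}"] by (auto simp: card_Pow)
  obtain F where "F \<subseteq> E" "card F = 2" using obtain_subset_with_card_n[OF assms] by blast
  then obtain e1 e2 where e: "e1 \<in> E" "e2 \<in> E" "e1 \<noteq> e2" by (auto simp: card_2_iff)
  have "\<not> berge_copy E {A \<in> Pow {1..n}. h A = i}" for i
  proof
    assume "berge_copy E {A \<in> Pow {1..n}. h A = i}"
    then obtain psi where "inj_on psi E" "\<forall>e\<in>E. psi e \<in> {A \<in> Pow {1..n}. h A = i}"
      unfolding berge_copy_def by blast
    then show False
      using e h by (auto simp: bij_betw_def inj_on_def)
  qed
  moreover have "\<forall>A\<in>Pow {1..n}. h A < 2 ^ n" using h by (auto simp: bij_betw_def)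
  ultimately show ?thesis unfolding good_coloring_def by blast
qed

lemma card_large_subsets_le_good_coloring:
  assumes G: "is_graph E" and deg: "\<forall>v. gdegree E v \<le> 2" and c: "good_coloring E n k c"
  shows "card {A \<in> Pow {1..n}. n + 2 * card E \<le> 2 * card A} \<le> k * (card E - 1)"
proof -
  define L where "L = {A \<in> Pow {1..n}. n + 2 * card E \<le> 2 * card A}"
  have class_small: "card {A \<in> L. c A = i} \<le> card E - 1" for i
  proof (rule ccontr)
    assume "\<not> ?thesis"
    then have "berge_copy E {A \<in> L. c A = i}"
      by (intro berge_copy_of_large_sets[OF G deg, of "{1..n}"]) (auto simp: L_def)
    then have "berge_copy E {A \<in> Pow {1..n}. c A = i}"
      by (rule berge_copy_mono) (auto simp: L_def)
    then show False using c unfolding good_coloring_def by blast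
  qed
  have "L \<subseteq> (\<Union>i<k. {A \<in> L. c A = i})"
    using c unfolding good_coloring_def L_def by auto
  then have "card L \<le> card (\<Union>i<k. {A \<in> L. c A = i})"
    by (intro card_mono) (auto simp: L_def)
  also have "\<dots> \<le> (\<Sum>i<k. card {A \<in> L. c A = i})" by (rule card_UN_le) simp
  also have "\<dots> \<le> (\<Sum>i<k. card E - 1)" by (intro sum_mono class_small)
  also have "\<dots> = k * (card E - 1)" by simp
  finally show ?thesis unfolding L_def .
qed

lemma card_large_subsets_le_f_berge:
  assumes "is_graph E" "\<forall>v. gdegree E v \<le> 2" "2 \<le> card E"
  shows "card {A \<in> Pow {1..n}. n + 2 * card E \<le> 2 * card A} \<le> f_berge n E * (card E - 1)"
proof -
  have "\<exists>c. good_coloring E n (f_berge n E) c"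
    unfolding f_berge_def by (rule LeastI_ex) (use ex_good_coloring_2_pow[OF assms(3)] in blast)
  then show ?thesis using card_large_subsets_le_good_coloring[OF assms(1,2)] by blast
qed

lemma f_berge_lower_bound:
  assumes "is_graph E" "\<forall>v. gdegree E v \<le> 2" "2 \<le> card E" "1 \<le> n"
  shows "2 ^ (n - 1) / (real (card E) - 1) * (1 - (4 * real (card E) + 1) / sqrt (real n + 1))
           \<le> real (f_berge n E)"
proof -
  define m where "m = card E"
  define L where "L = card {A \<in> Pow {1..n}. n + 2 * m \<le> 2 * card A}"
  have "real L \<le> real (f_berge n E * (m - 1))"
    using card_large_subsets_le_f_berge[OF assms(1-3)] unfolding L_def m_def
    by (simp only: of_nat_le_iff)
  then have fL: "real L \<le> real (f_berge n E) * (real m - 1)"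
    using assms(3) by (simp add: m_def of_nat_diff)
  have "real (2 ^ n) \<le> real (2 * L + (2 * (2 * m) + 1) * (n choose (n div 2)))"
    using two_pow_le_card_large_subsets[of "{1..n}" "2 * m"] unfolding L_def
    by (simp only: of_nat_le_iff) simp
  then have "2 ^ n \<le> 2 * real L + (4 * real m + 1) * real (n choose (n div 2))"
    by (simp add: algebra_simps)
  also have "\<dots> \<le> 2 * real L + (4 * real m + 1) * (2 ^ n / sqrt (real n + 1))"
    using central_binomial_le[of n] by (intro add_left_mono mult_left_mono) auto
  finally have "2 ^ n * (1 - (4 * real m + 1) / sqrt (real n + 1)) \<le> 2 * real L"
    by (simp add: algebra_simps)
  moreover have "(2::real) ^ n = 2 * 2 ^ (n - 1)" using assms(4) by (simp flip: power_Suc)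
  ultimately have "2 ^ (n - 1) * (1 - (4 * real m + 1) / sqrt (real n + 1))
                     \<le> real (f_berge n E) * (real m - 1)"
    using fL by simp
  moreover have "real m - 1 > 0" using assms(3) by (simp add: m_def)
  ultimately show ?thesis unfolding m_def by (simp add: field_simps)
qed

theorem theorem3:
  fixes E :: "'v set set"
  assumes "is_graph E"
    and "card E \<ge> 2"
    and "\<not> is_2K2 E"
    and "\<forall>v. gdegree E v \<le> 2"
  shows "\<exists>g :: nat \<Rightarrow> real. g \<longlonglongrightarrow> 0 \<and>
           (\<forall>\<^sub>F n in sequentially.
              real (f_berge n E) \<ge> 2 ^ (n - 1) / (real (card E) - 1) * (1 - g n))"
proof (intro exI conjI)
  show "(\<lambda>n. (4 * real (card E) + 1) / sqrt (real n + 1)) \<longlonglongrightarrow> 0"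
    by real_asymp
  show "\<forall>\<^sub>F n in sequentially. 2 ^ (n - 1) / (real (card E) - 1)
          * (1 - (4 * real (card E) + 1) / sqrt (real n + 1)) \<le> real (f_berge n E)"
    using eventually_ge_at_top[of 1]
    by eventually_elim (rule f_berge_lower_bound[OF assms(1,4,2)])
qed

end
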